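(* Let $k$ be a commutative ring, $H$ a Hopf algebra over $k$ with bijective antipode $S$ (inverse $\overline{S}$), and $A$ a right $H$-comodule algebra. Then there is an isomorphism of categories $\gamma:\ \mathcal{C}'_A\to\mathcal{C}_A$ which is the identity on objects and is given on morphisms by $\gamma(f')=f'\circ S$; in particular $f'\circ S\in\mathcal{C}_A(\mathbf{i},\mathbf{j})$ for every $f'\in\mathcal{C}'_A(\mathbf{i},\mathbf{j})$, $\gamma(g'\star f')=\gamma(g')*\gamma(f')$, and the inverse functor is $f\mapsto f\circ\overline{S}$.
   Context: Sweedler notation: $\Delta(h)=h_{(1)}\otimes h_{(2)}$, and for a right $H$-comodule, $\rho(a)=a_{[0]}\otimes a_{[1]}$. A right $H$-comodule algebra is an algebra $A$ with a right $H$-coaction $\rho$ that is an algebra map. Let $B=A^{\mathrm{co}H}=\{a\in A:\rho(a)=a\otimes 1\}$. The category $\mathcal{C}_A$ has two objects $\mathbf{1},\mathbf{2}$; writing $\mathcal{C}_A(\mathbf{i},\mathbf{j})$ for the morphisms from $\mathbf{i}$ to $\mathbf{j}$, all of them sets of $k$-linear maps $H\to A$: $\mathcal{C}_A(\mathbf{1},\mathbf{1})=\{v:\rho(v(h))=v(h)\otimes 1\}=\mathrm{Hom}(H,B)$; $\mathcal{C}_A(\mathbf{2},\mathbf{1})=\{t:\rho(t(h))=t(h_{(1)})\otimes h_{(2)}\}=\mathrm{Hom}^H(H,A)$; $\mathcal{C}_A(\mathbf{1},\mathbf{2})=\{u:\rho(u(h))=u(h_{(2)})\otimes S(h_{(1)})\}$;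 $\mathcal{C}_A(\mathbf{2},\mathbf{2})=\{w:\rho(w(h))=w(h_{(2)})\otimes S(h_{(1)})h_{(3)}\}$ (all conditions for all $h\in H$). Composition of $f:\mathbf{i}\to\mathbf{j}$ and $g:\mathbf{j}\to\mathbf{k}$ is the convolution $g*f$, $(g*f)(h)=g(h_{(1)})f(h_{(2)})$; identities are $h\mapsto\varepsilon(h)1_A$. The category $\mathcal{C}'_A$ has objects $\mathbf{1},\mathbf{2}$ and morphism sets of $k$-linear maps $H\to A$: $\mathcal{C}'_A(\mathbf{1},\mathbf{1})=\mathrm{Hom}(H,B)$; $\mathcal{C}'_A(\mathbf{1},\mathbf{2})=\{t':\rho(t'(h))=t'(h_{(1)})\otimes h_{(2)}\}=\mathrm{Hom}^H(H,A)$; $\mathcal{C}'_A(\mathbf{2},\mathbf{1})=\{u':\rho(u'(h))=u'(h_{(2)})\otimes \overline{S}(h_{(1)})\}$; $\mathcal{C}'_A(\mathbf{2},\mathbf{2})=\{w':\rho(w'(h))=w'(h_{(2)})\otimes h_{(3)}\overline{S}(h_{(1)})\}$; composition of $f':\mathbf{i}\to\mathbf{j}$ and $g':\mathbf{j}\to\mathbf{k}$ is $g'\star f'$, $(g'\star f')(h)=g'(h_{(2)})f'(h_{(1)})$. *)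

theory Defs
  imports Complex_Main "HOL-Library.Function_Algebras"
begin

text \<open>An element of a tensor product M1 (x) ... (x) Mn over the commutative ring k is
represented by a finite list of elementary tensors (scalars are absorbed into the
first factor).  Two such lists denote the same tensor iff the difference of the
associated elements of the free k-module on M1 x ... x Mn lies in the k-span of the
standard (multi)linearity relations.\<close>

definition fscale :: "'k::comm_ring_1 \<Rightarrow> ('x \<Rightarrow> 'k) \<Rightarrow> ('x \<Rightarrow> 'k)" where
  "fscale c f = (\<lambda>q. c * f q)"

definition dlt :: "'x \<Rightarrow> ('x \<Rightarrow> 'k::comm_ring_1)" where
  "dlt p = (\<lambda>q. if q = p then 1 else 0)"

definition fs :: "'x list \<Rightarrow> ('x \<Rightarrow> 'k::comm_ring_1)" where
  "fs xs = (\<lambda>q. of_nat (count_list xs q))"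

definition gen2 :: "('k::comm_ring_1 \<Rightarrow> 'm::ab_group_add \<Rightarrow> 'm) \<Rightarrow>
    ('k \<Rightarrow> 'n::ab_group_add \<Rightarrow> 'n) \<Rightarrow> (('m \<times> 'n) \<Rightarrow> 'k) set" where
  "gen2 sM sN =
     {dlt (m + m', n) - dlt (m, n) - dlt (m', n) | m m' n. True} \<union>
     {dlt (m, n + n') - dlt (m, n) - dlt (m, n') | m n n'. True} \<union>
     {dlt (sM c m, n) - fscale c (dlt (m, n)) | c m n. True} \<union>
     {dlt (m, sN c n) - fscale c (dlt (m, n)) | c m n. True}"

definition teq2 :: "('k::comm_ring_1 \<Rightarrow> 'm::ab_group_add \<Rightarrow> 'm) \<Rightarrow>
    ('k \<Rightarrow> 'n::ab_group_add \<Rightarrow> 'n) \<Rightarrow> ('m \<times> 'n) list \<Rightarrow> ('m \<times> 'n) list \<Rightarrow> bool" where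
  "teq2 sM sN xs ys \<longleftrightarrow>
     (fs xs - fs ys :: ('m \<times> 'n) \<Rightarrow> 'k) \<in> module.span fscale (gen2 sM sN)"

definition gen3 :: "('k::comm_ring_1 \<Rightarrow> 'm::ab_group_add \<Rightarrow> 'm) \<Rightarrow>
    ('k \<Rightarrow> 'n::ab_group_add \<Rightarrow> 'n) \<Rightarrow> ('k \<Rightarrow> 'p::ab_group_add \<Rightarrow> 'p) \<Rightarrow>
    (('m \<times> 'n \<times> 'p) \<Rightarrow> 'k) set" where
  "gen3 sM sN sP =
     {dlt (m + m', n, p) - dlt (m, n, p) - dlt (m', n, p) | m m' n p. True} \<union>
     {dlt (m, n + n', p) - dlt (m, n, p) - dlt (m, n', p) | m n n' p. True} \<union>
     {dlt (m, n, p + p') - dlt (m, n, p) - dlt (m, n, p') | m n p p'. True} \<union>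
     {dlt (sM c m, n, p) - fscale c (dlt (m, n, p)) | c m n p. True} \<union>
     {dlt (m, sN c n, p) - fscale c (dlt (m, n, p)) | c m n p. True} \<union>
     {dlt (m, n, sP c p) - fscale c (dlt (m, n, p)) | c m n p. True}"

definition teq3 :: "('k::comm_ring_1 \<Rightarrow> 'm::ab_group_add \<Rightarrow> 'm) \<Rightarrow>
    ('k \<Rightarrow> 'n::ab_group_add \<Rightarrow> 'n) \<Rightarrow> ('k \<Rightarrow> 'p::ab_group_add \<Rightarrow> 'p) \<Rightarrow>
    ('m \<times> 'n \<times> 'p) list \<Rightarrow> ('m \<times> 'n \<times> 'p) list \<Rightarrow> bool" where
  "teq3 sM sN sP xs ys \<longleftrightarrow>
     (fs xs - fs ys :: ('m \<times> 'n \<times> 'p) \<Rightarrow> 'k) \<in> module.span fscale (gen3 sM sN sP)"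

definition kalg :: "('k::comm_ring_1 \<Rightarrow> 'r::ring_1 \<Rightarrow> 'r) \<Rightarrow> bool" where
  "kalg sc \<longleftrightarrow> module sc \<and> (\<forall>c x y. sc c (x * y) = sc c x * y \<and> sc c (x * y) = x * sc c y)"

definition cop2 :: "('h \<Rightarrow> ('h \<times> 'h) list) \<Rightarrow> 'h \<Rightarrow> ('h \<times> 'h \<times> 'h) list" where
  "cop2 \<Delta> h = concat (map (\<lambda>(a, b). map (\<lambda>(a1, a2). (a1, a2, b)) (\<Delta> a)) (\<Delta> h))"

definition hopf_algebra :: "('k::comm_ring_1 \<Rightarrow> 'h::ring_1 \<Rightarrow> 'h) \<Rightarrow>
    ('h \<Rightarrow> ('h \<times> 'h) list) \<Rightarrow> ('h \<Rightarrow> 'k) \<Rightarrow> ('h \<Rightarrow> 'h) \<Rightarrow> bool" where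
  "hopf_algebra sc \<Delta> \<epsilon> S \<longleftrightarrow>
     kalg sc \<and>
     \<comment> \<open>Delta is k-linear H -> H (x) H\<close>
     (\<forall>x y. teq2 sc sc (\<Delta> (x + y)) (\<Delta> x @ \<Delta> y)) \<and>
     (\<forall>c x. teq2 sc sc (\<Delta> (sc c x)) (map (\<lambda>(a, b). (sc c a, b)) (\<Delta> x))) \<and>
     \<comment> \<open>coassociativity\<close>
     (\<forall>h. teq3 sc sc sc (cop2 \<Delta> h)
            (concat (map (\<lambda>(a, b). map (\<lambda>(b1, b2). (a, b1, b2)) (\<Delta> b)) (\<Delta> h)))) \<and>
     \<comment> \<open>counit\<close>
     module_hom sc (\<lambda>c x. c * x) \<epsilon> \<and>
     (\<forall>h. sum_list (map (\<lambda>(a, b). sc (\<epsilon> a) b) (\<Delta> h)) = h) \<and>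
     (\<forall>h. sum_list (map (\<lambda>(a, b). sc (\<epsilon> b) a) (\<Delta> h)) = h) \<and>
     \<comment> \<open>Delta and epsilon are algebra maps\<close>
     (\<forall>x y. teq2 sc sc (\<Delta> (x * y))
        (concat (map (\<lambda>(a, b). map (\<lambda>(a', b'). (a * a', b * b')) (\<Delta> y)) (\<Delta> x)))) \<and>
     teq2 sc sc (\<Delta> 1) [(1, 1)] \<and>
     (\<forall>x y. \<epsilon> (x * y) = \<epsilon> x * \<epsilon> y) \<and> \<epsilon> 1 = 1 \<and>
     \<comment> \<open>antipode\<close>
     module_hom sc sc S \<and>
     (\<forall>h. sum_list (map (\<lambda>(a, b). S a * b) (\<Delta> h)) = sc (\<epsilon> h) 1) \<and>
     (\<forall>h. sum_list (map (\<lambda>(a, b). a * S b) (\<Delta> h)) = sc (\<epsilon> h) 1)"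

definition comodule_algebra :: "('k::comm_ring_1 \<Rightarrow> 'h::ring_1 \<Rightarrow> 'h) \<Rightarrow>
    ('h \<Rightarrow> ('h \<times> 'h) list) \<Rightarrow> ('h \<Rightarrow> 'k) \<Rightarrow>
    ('k \<Rightarrow> 'a::ring_1 \<Rightarrow> 'a) \<Rightarrow> ('a \<Rightarrow> ('a \<times> 'h) list) \<Rightarrow> bool" where
  "comodule_algebra sc \<Delta> \<epsilon> scA \<rho> \<longleftrightarrow>
     kalg scA \<and>
     (\<forall>x y. teq2 scA sc (\<rho> (x + y)) (\<rho> x @ \<rho> y)) \<and>
     (\<forall>c x. teq2 scA sc (\<rho> (scA c x)) (map (\<lambda>(a, b). (scA c a, b)) (\<rho> x))) \<and>
     (\<forall>x. teq3 scA sc sc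
        (concat (map (\<lambda>(a, b). map (\<lambda>(a0, a1). (a0, a1, b)) (\<rho> a)) (\<rho> x)))
        (concat (map (\<lambda>(a, b). map (\<lambda>(b1, b2). (a, b1, b2)) (\<Delta> b)) (\<rho> x)))) \<and>
     (\<forall>x. sum_list (map (\<lambda>(a, b). scA (\<epsilon> b) a) (\<rho> x)) = x) \<and>
     (\<forall>x y. teq2 scA sc (\<rho> (x * y))
        (concat (map (\<lambda>(a, b). map (\<lambda>(a', b'). (a * a', b * b')) (\<rho> y)) (\<rho> x)))) \<and>
     teq2 scA sc (\<rho> 1) [(1, 1)]"

datatype obj = One | Two

definition conv :: "('h \<Rightarrow> ('h \<times> 'h) list) \<Rightarrow> ('h \<Rightarrow> 'a::ring_1) \<Rightarrow> ('h \<Rightarrow> 'a) \<Rightarrow> 'h \<Rightarrow> 'a" where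
  "conv \<Delta> g f h = sum_list (map (\<lambda>(a, b). g a * f b) (\<Delta> h))"

definition conv' :: "('h \<Rightarrow> ('h \<times> 'h) list) \<Rightarrow> ('h \<Rightarrow> 'a::ring_1) \<Rightarrow> ('h \<Rightarrow> 'a) \<Rightarrow> 'h \<Rightarrow> 'a" where
  "conv' \<Delta> g f h = sum_list (map (\<lambda>(a, b). g b * f a) (\<Delta> h))"

definition cid :: "('h \<Rightarrow> 'k::comm_ring_1) \<Rightarrow> ('k \<Rightarrow> 'a::ring_1 \<Rightarrow> 'a) \<Rightarrow> 'h \<Rightarrow> 'a" where
  "cid \<epsilon> scA h = scA (\<epsilon> h) 1"

text \<open>CA ... i j is the set of morphisms from object i to object j in C_A.\<close>
fun CA :: "('k::comm_ring_1 \<Rightarrow> 'h::ring_1 \<Rightarrow> 'h) \<Rightarrow> ('h \<Rightarrow> ('h \<times> 'h) list) \<Rightarrow> ('h \<Rightarrow> 'h) \<Rightarrow>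
    ('k \<Rightarrow> 'a::ring_1 \<Rightarrow> 'a) \<Rightarrow> ('a \<Rightarrow> ('a \<times> 'h) list) \<Rightarrow> obj \<Rightarrow> obj \<Rightarrow> ('h \<Rightarrow> 'a) set" where
  "CA sc \<Delta> S scA \<rho> One One =
     {v. module_hom sc scA v \<and> (\<forall>h. teq2 scA sc (\<rho> (v h)) [(v h, 1)])}"
| "CA sc \<Delta> S scA \<rho> Two One =
     {t. module_hom sc scA t \<and> (\<forall>h. teq2 scA sc (\<rho> (t h)) (map (\<lambda>(a, b). (t a, b)) (\<Delta> h)))}"
| "CA sc \<Delta> S scA \<rho> One Two =
     {u. module_hom sc scA u \<and> (\<forall>h. teq2 scA sc (\<rho> (u h)) (map (\<lambda>(a, b). (u b, S a)) (\<Delta> h)))}"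
| "CA sc \<Delta> S scA \<rho> Two Two =
     {w. module_hom sc scA w \<and>
         (\<forall>h. teq2 scA sc (\<rho> (w h)) (map (\<lambda>(a1, a2, a3). (w a2, S a1 * a3)) (cop2 \<Delta> h)))}"

text \<open>CA' ... i j is the set of morphisms from object i to object j in C'_A.\<close>
fun CA' :: "('k::comm_ring_1 \<Rightarrow> 'h::ring_1 \<Rightarrow> 'h) \<Rightarrow> ('h \<Rightarrow> ('h \<times> 'h) list) \<Rightarrow> ('h \<Rightarrow> 'h) \<Rightarrow>
    ('k \<Rightarrow> 'a::ring_1 \<Rightarrow> 'a) \<Rightarrow> ('a \<Rightarrow> ('a \<times> 'h) list) \<Rightarrow> obj \<Rightarrow> obj \<Rightarrow> ('h \<Rightarrow> 'a) set" where
  "CA' sc \<Delta> Sbar scA \<rho> One One =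
     {v. module_hom sc scA v \<and> (\<forall>h. teq2 scA sc (\<rho> (v h)) [(v h, 1)])}"
| "CA' sc \<Delta> Sbar scA \<rho> One Two =
     {t. module_hom sc scA t \<and> (\<forall>h. teq2 scA sc (\<rho> (t h)) (map (\<lambda>(a, b). (t a, b)) (\<Delta> h)))}"
| "CA' sc \<Delta> Sbar scA \<rho> Two One =
     {u. module_hom sc scA u \<and> (\<forall>h. teq2 scA sc (\<rho> (u h)) (map (\<lambda>(a, b). (u b, Sbar a)) (\<Delta> h)))}"
| "CA' sc \<Delta> Sbar scA \<rho> Two Two =
     {w. module_hom sc scA w \<and>
         (\<forall>h. teq2 scA sc (\<rho> (w h)) (map (\<lambda>(a1, a2, a3). (w a2, a3 * Sbar a1)) (cop2 \<Delta> h)))}"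

end

theory Submission
  imports Defs
begin

text \<open>The antipode of a Hopf algebra is an anti-coalgebra map,
  \<open>\<Delta>(S h) = S h\<^sub>(\<^sub>2\<^sub>) \<otimes> S h\<^sub>(\<^sub>1\<^sub>)\<close>: both sides are convolution inverses of \<open>\<Delta>\<close> in
  \<open>Hom(H, H \<otimes> H)\<close>, so they agree.  The same then holds for \<open>S\<inverse>\<close> and for the iterated coproduct.
  Substituting \<open>S h\<close> into the coaction condition defining a morphism of \<open>\<C>'\<^sub>A\<close> and
  rewriting \<open>\<Delta>(S h)\<close> in this way yields exactly the condition of \<open>\<C>\<^sub>A\<close> for \<open>f' \<circ> S\<close>, and
  symmetrically for \<open>f \<circ> S\<inverse>\<close>; the same substitution in \<open>g' \<star> f'\<close> gives \<open>(g' \<circ> S) * (f' \<circ> S)\<close>,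
  and \<open>\<epsilon> \<circ> S = \<epsilon>\<close> takes care of the identities.

  All tensor identities are statements about representing lists of elementary tensors;
  they are transported along (multi)linear maps via the universal property of the
  tensor product, realised here as the linear extension of a map to formal sums.\<close>

section \<open>Tensor products as formal sums\<close>

definition supp :: "('x \<Rightarrow> 'k::comm_ring_1) \<Rightarrow> 'x set" where
  "supp F = {x. F x \<noteq> 0}"

definition lin_ext :: "('k::comm_ring_1 \<Rightarrow> 'b::ab_group_add \<Rightarrow> 'b) \<Rightarrow> ('x \<Rightarrow> 'b) \<Rightarrow> ('x \<Rightarrow> 'k) \<Rightarrow> 'b"
  where "lin_ext s \<Phi> F = (\<Sum>x\<in>supp F. s (F x) (\<Phi> x))"

abbreviation fspan :: "('x \<Rightarrow> 'k::comm_ring_1) set \<Rightarrow> ('x \<Rightarrow> 'k) set" where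
  "fspan \<equiv> module.span fscale"

lemma module_fscale: "module (fscale :: 'k::comm_ring_1 \<Rightarrow> ('x \<Rightarrow> 'k) \<Rightarrow> _)"
  by unfold_locales (auto simp: fscale_def fun_eq_iff algebra_simps)

lemma supp_add: "supp (F + G) \<subseteq> supp F \<union> supp G" by (auto simp: supp_def)
lemma supp_minus: "supp (- F) = supp F" by (auto simp: supp_def)
lemma supp_fscale: "supp (fscale c F) \<subseteq> supp F" by (auto simp: supp_def fscale_def)
lemma supp_dlt: "supp (dlt x :: _ \<Rightarrow> 'k::comm_ring_1) = {x}" by (auto simp: supp_def dlt_def)
lemma supp_zero: "supp 0 = {}" by (auto simp: supp_def)

lemma finite_supp_dlt: "finite (supp (dlt x :: _ \<Rightarrow> 'k::comm_ring_1))"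
  by (simp add: supp_dlt)
lemma finite_supp_add: "finite (supp F) \<Longrightarrow> finite (supp G) \<Longrightarrow> finite (supp (F + G))"
  by (meson finite_UnI finite_subset supp_add)
lemma finite_supp_diff: "finite (supp F) \<Longrightarrow> finite (supp G) \<Longrightarrow> finite (supp (F - G))"
  using finite_supp_add[of F "-G"] by (simp add: supp_minus)
lemma finite_supp_fscale: "finite (supp F) \<Longrightarrow> finite (supp (fscale c F))"
  by (meson finite_subset supp_fscale)

lemma fs_Nil: "fs [] = 0" by (simp add: fs_def fun_eq_iff)
lemma fs_Cons: "fs (x # xs) = dlt x + fs xs" by (simp add: fs_def dlt_def fun_eq_iff)
lemma fs_single: "fs [x] = dlt x" by (simp add: fs_Cons fs_Nil)
lemma fs_append: "fs (xs @ ys) = fs xs + fs ys" by (simp add: fs_def fun_eq_iff)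
lemma fs_concat: "fs (concat (map G xs)) = sum_list (map (\<lambda>x. fs (G x)) xs)"
  by (induction xs) (auto simp: fs_Nil fs_append)

lemma finite_supp_fs: "finite (supp (fs xs :: _ \<Rightarrow> 'k::comm_ring_1))"
proof (induction xs)
  case Nil show ?case unfolding fs_Nil supp_zero by simp
next
  case (Cons x xs) show ?case unfolding fs_Cons by (rule finite_supp_add[OF finite_supp_dlt Cons])
qed

lemma fscale_add: "fscale c (F + G) = fscale c F + fscale c G"
  by (simp add: fscale_def fun_eq_iff algebra_simps)
lemma fscale_diff: "fscale c (F - G) = fscale c F - fscale c G"
  by (simp add: fscale_def fun_eq_iff algebra_simps)
lemma fscale_zero: "fscale c 0 = 0"
  by (simp add: fscale_def fun_eq_iff)

lemma lin_ext_superset: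
  assumes "module s" "finite X" "supp F \<subseteq> X"
  shows "lin_ext s \<Phi> F = (\<Sum>x\<in>X. s (F x) (\<Phi> x))"
  unfolding lin_ext_def
  by (rule sum.mono_neutral_left) (use assms in \<open>auto simp: supp_def module.scale_zero_left\<close>)

lemma lin_ext_add:
  assumes "module s" "finite (supp F)" "finite (supp G)"
  shows "lin_ext s \<Phi> (F + G) = lin_ext s \<Phi> F + lin_ext s \<Phi> G"
proof -
  let ?X = "supp F \<union> supp G"
  have "lin_ext s \<Phi> (F + G) = (\<Sum>x\<in>?X. s ((F + G) x) (\<Phi> x))"
    by (rule lin_ext_superset[OF assms(1)]) (use assms supp_add[of F G] in auto)
  also have "\<dots> = (\<Sum>x\<in>?X. s (F x) (\<Phi> x)) + (\<Sum>x\<in>?X. s (G x) (\<Phi> x))"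
    by (simp only: plus_fun_apply module.scale_left_distrib[OF assms(1)] sum.distrib)
  also have "\<dots> = lin_ext s \<Phi> F + lin_ext s \<Phi> G"
    using lin_ext_superset[OF assms(1), of ?X] assms by auto
  finally show ?thesis .
qed

lemma lin_ext_scale:
  assumes "module s" "finite (supp F)"
  shows "lin_ext s \<Phi> (fscale c F) = s c (lin_ext s \<Phi> F)"
proof -
  have "lin_ext s \<Phi> (fscale c F) = (\<Sum>x\<in>supp F. s (fscale c F x) (\<Phi> x))"
    by (rule lin_ext_superset[OF assms(1)]) (use assms supp_fscale[of c F] in auto)
  also have "\<dots> = s c (lin_ext s \<Phi> F)"
    by (simp add: fscale_def lin_ext_def module.scale_sum_right[OF assms(1)]
        module.scale_scale[OF assms(1)])
  finally show ?thesis .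
qed

lemma lin_ext_diff:
  assumes s: "module s" and F: "finite (supp F)" and G: "finite (supp G)"
  shows "lin_ext s \<Phi> (F - G) = lin_ext s \<Phi> F - lin_ext s \<Phi> G"
proof -
  have "- G = fscale (-1) G" by (auto simp: fscale_def fun_eq_iff)
  then have "lin_ext s \<Phi> (- G) = - lin_ext s \<Phi> G"
    using lin_ext_scale[OF s G, of \<Phi> "-1"]
    by (simp add: module.scale_minus_left[OF s] module.scale_one[OF s])
  then show ?thesis
    using lin_ext_add[OF s F, of "- G"] G by (simp add: supp_minus)
qed

lemma lin_ext_dlt: "module s \<Longrightarrow> lin_ext s \<Phi> (dlt x) = \<Phi> x"
  unfolding lin_ext_def supp_dlt by (simp add: dlt_def module.scale_one)

lemma lin_ext_fs: "module s \<Longrightarrow> lin_ext s \<Phi> (fs xs) = sum_list (map \<Phi> xs)"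
proof (induction xs)
  case Nil show ?case unfolding fs_Nil lin_ext_def supp_zero by simp
next
  case (Cons a xs) then show ?case unfolding fs_Cons
    by (simp only: lin_ext_add[OF _ finite_supp_dlt finite_supp_fs] lin_ext_dlt list.map sum_list.Cons)
qed

lemma lin_ext_span:
  assumes s: "module s" and N: "module.subspace s N"
    and R: "\<forall>r\<in>R. finite (supp r) \<and> lin_ext s \<Phi> r \<in> N"
    and F: "F \<in> fspan R"
  shows "finite (supp F) \<and> lin_ext s \<Phi> F \<in> N"
proof -
  let ?P = "{F. finite (supp F) \<and> lin_ext s \<Phi> F \<in> N}"
  have "module.subspace fscale ?P"
    unfolding module.subspace_def[OF module_fscale]
    using module.subspace_0[OF s N] module.subspace_add[OF s N] module.subspace_scale[OF s N]
    by (auto simp: supp_zero lin_ext_add[OF s] lin_ext_scale[OF s] finite_supp_add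
        finite_supp_fscale, simp add: lin_ext_def supp_zero)
  then show ?thesis
    by (rule module.span_induct[OF module_fscale F]) (use R in auto)
qed

definition teq_mod :: "(('x \<Rightarrow> 'k::comm_ring_1) set) \<Rightarrow> 'x list \<Rightarrow> 'x list \<Rightarrow> bool" where
  "teq_mod R xs ys \<longleftrightarrow> (fs xs - fs ys :: 'x \<Rightarrow> 'k) \<in> fspan R"

lemma teq2_eq_teq_mod: "teq2 sM sN = teq_mod (gen2 sM sN)"
  by (simp add: fun_eq_iff teq2_def teq_mod_def)
lemma teq3_eq_teq_mod: "teq3 sM sN sP = teq_mod (gen3 sM sN sP)"
  by (simp add: fun_eq_iff teq3_def teq_mod_def)

lemma teq_mod_refl: "teq_mod R xs xs"
  by (simp add: teq_mod_def module.span_zero[OF module_fscale])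
lemma teq_mod_of_fs_eq:
  assumes "(fs xs :: 'x \<Rightarrow> 'k) = fs ys"
  shows "teq_mod (R :: ('x \<Rightarrow> 'k::comm_ring_1) set) xs ys"
  unfolding teq_mod_def assms diff_self by (rule module.span_zero[OF module_fscale])
lemma teq_mod_sym: "teq_mod R xs ys \<Longrightarrow> teq_mod R ys xs"
  unfolding teq_mod_def by (drule module.span_neg[OF module_fscale]) simp
lemma teq_mod_trans: "teq_mod R xs ys \<Longrightarrow> teq_mod R ys zs \<Longrightarrow> teq_mod R xs zs"
  unfolding teq_mod_def by (drule (1) module.span_add[OF module_fscale]) simp
declare teq_mod_trans [trans]

lemma teq_mod_append:
  "teq_mod R xs xs' \<Longrightarrow> teq_mod R ys ys' \<Longrightarrow> teq_mod R (xs @ ys) (xs' @ ys')"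
  unfolding teq_mod_def fs_append
  by (drule (1) module.span_add[OF module_fscale]) (simp add: algebra_simps)
lemma teq_mod_concat_cong:
  "(\<And>x. x \<in> set xs \<Longrightarrow> teq_mod R (f x) (g x)) \<Longrightarrow>
    teq_mod R (concat (map f xs)) (concat (map g xs))"
  by (induction xs) (auto simp: teq_mod_refl intro: teq_mod_append)
lemma teq_mod_append_iff: "teq_mod R X (Y @ Z) \<longleftrightarrow> fs X - fs Y - fs Z \<in> fspan R"
  unfolding teq_mod_def fs_append by (simp add: diff_diff_eq)
lemma teq_mod_Nil_of_self_append: "teq_mod R X (X @ X) \<Longrightarrow> teq_mod R X []"
  unfolding teq_mod_def fs_append fs_Nil by (simp, metis module.span_neg[OF module_fscale] minus_minus)

lemma fs_diff_scale_teq_mod: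
  assumes "teq_mod R X Y" "fs Y - fscale c (fs Z) \<in> fspan R"
  shows "fs X - fscale c (fs Z) \<in> fspan R"
proof -
  have "fs X - fscale c (fs Z) = (fs X - fs Y) + (fs Y - fscale c (fs Z))" by simp
  thus ?thesis using assms unfolding teq_mod_def by (metis module.span_add[OF module_fscale])
qed

lemma teq_mod_map_pointwise:
  "(\<And>y. y \<in> set ys \<Longrightarrow> dlt (f y) - dlt (g y) \<in> fspan R) \<Longrightarrow> teq_mod R (map f ys) (map g ys)"
  unfolding teq_mod_def
proof (induction ys)
  case Nil show ?case by (simp only: list.map fs_Nil diff_self module.span_zero[OF module_fscale])
next
  case (Cons y ys)
  have eq: "fs (map f (y # ys)) - fs (map g (y # ys)) =
      (dlt (f y) - dlt (g y)) + (fs (map f ys) - fs (map g ys))"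
    by (simp add: fs_Cons algebra_simps)
  show ?case unfolding eq by (intro module.span_add[OF module_fscale] Cons.prems Cons.IH) auto
qed

lemma fs_map_diff3_in_fspan:
  "(\<And>y. y \<in> set ys \<Longrightarrow> dlt (f y) - dlt (g y) - dlt (h y) \<in> fspan R) \<Longrightarrow>
    fs (map f ys) - fs (map g ys) - fs (map h ys) \<in> fspan R"
proof (induction ys)
  case Nil show ?case by (simp only: list.map fs_Nil diff_self module.span_zero[OF module_fscale])
next
  case (Cons y ys)
  have eq: "fs (map f (y # ys)) - fs (map g (y # ys)) - fs (map h (y # ys)) =
      (dlt (f y) - dlt (g y) - dlt (h y)) + (fs (map f ys) - fs (map g ys) - fs (map h ys))"
    by (simp add: fs_Cons algebra_simps)
  show ?case unfolding eq by (intro module.span_add[OF module_fscale] Cons.prems Cons.IH) auto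
qed

lemma fs_map_diff_scale_in_fspan:
  "(\<And>y. y \<in> set ys \<Longrightarrow> dlt (f y) - fscale c (dlt (g y)) \<in> fspan R) \<Longrightarrow>
    fs (map f ys) - fscale c (fs (map g ys)) \<in> fspan R"
proof (induction ys)
  case Nil
  show ?case by (simp only: list.map fs_Nil fscale_zero diff_self module.span_zero[OF module_fscale])
next
  case (Cons y ys)
  have eq: "fs (map f (y # ys)) - fscale c (fs (map g (y # ys))) =
      (dlt (f y) - fscale c (dlt (g y))) + (fs (map f ys) - fscale c (fs (map g ys)))"
    by (simp add: fs_Cons fscale_add algebra_simps)
  show ?case unfolding eq by (intro module.span_add[OF module_fscale] Cons.prems Cons.IH) auto
qed

lemma gen2_add_left: "dlt (x + x', y) - dlt (x, y) - dlt (x', y) \<in> fspan (gen2 tM tN)"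
  by (rule module.span_base[OF module_fscale]) (unfold gen2_def, blast)
lemma gen2_add_right: "dlt (x, y + y') - dlt (x, y) - dlt (x, y') \<in> fspan (gen2 tM tN)"
  by (rule module.span_base[OF module_fscale]) (unfold gen2_def, blast)
lemma gen2_scale_left: "dlt (tM c x, y) - fscale c (dlt (x, y)) \<in> fspan (gen2 tM tN)"
  by (rule module.span_base[OF module_fscale]) (unfold gen2_def, blast)
lemma gen2_scale_right: "dlt (x, tN c y) - fscale c (dlt (x, y)) \<in> fspan (gen2 tM tN)"
  by (rule module.span_base[OF module_fscale]) (unfold gen2_def, blast)
lemma gen2_scale_swap: "dlt (x, tN c y) - dlt (tM c x, y) \<in> fspan (gen2 tM tN)"
proof -
  have "dlt (x, tN c y) - dlt (tM c x, y) =
    (dlt (x, tN c y) - fscale c (dlt (x, y))) - (dlt (tM c x, y) - fscale c (dlt (x, y)))"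
    by simp
  then show ?thesis by (metis gen2_scale_left gen2_scale_right module.span_diff[OF module_fscale])
qed

lemma gen3_add1: "dlt (x + x', y, z) - dlt (x, y, z) - dlt (x', y, z) \<in> fspan (gen3 tM tN tP)"
  by (rule module.span_base[OF module_fscale]) (unfold gen3_def, (rule UnI1)+, blast)
lemma gen3_add2: "dlt (x, y + y', z) - dlt (x, y, z) - dlt (x, y', z) \<in> fspan (gen3 tM tN tP)"
  by (rule module.span_base[OF module_fscale]) (unfold gen3_def, rule UnI1, rule UnI1, rule UnI1, rule UnI1, rule UnI2, blast)
lemma gen3_add3: "dlt (x, y, z + z') - dlt (x, y, z) - dlt (x, y, z') \<in> fspan (gen3 tM tN tP)"
  by (rule module.span_base[OF module_fscale]) (unfold gen3_def, rule UnI1, rule UnI1, rule UnI1, rule UnI2, blast)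
lemma gen3_scale1: "dlt (tM c x, y, z) - fscale c (dlt (x, y, z)) \<in> fspan (gen3 tM tN tP)"
  by (rule module.span_base[OF module_fscale]) (unfold gen3_def, rule UnI1, rule UnI1, rule UnI2, blast)
lemma gen3_scale2: "dlt (x, tN c y, z) - fscale c (dlt (x, y, z)) \<in> fspan (gen3 tM tN tP)"
  by (rule module.span_base[OF module_fscale]) (unfold gen3_def, rule UnI1, rule UnI2, blast)
lemma gen3_scale3: "dlt (x, y, tP c z) - fscale c (dlt (x, y, z)) \<in> fspan (gen3 tM tN tP)"
  by (rule module.span_base[OF module_fscale]) (unfold gen3_def, rule UnI2, blast)

subsection \<open>The universal property of the tensor product\<close>

definition bilinear_mod :: "('k::comm_ring_1 \<Rightarrow> 'b::ab_group_add \<Rightarrow> 'b) \<Rightarrow>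
    ('k \<Rightarrow> 'm::ab_group_add \<Rightarrow> 'm) \<Rightarrow> ('k \<Rightarrow> 'n::ab_group_add \<Rightarrow> 'n) \<Rightarrow>
    ('m \<times> 'n \<Rightarrow> 'b) \<Rightarrow> 'b set \<Rightarrow> bool" where
  "bilinear_mod s sM sN \<Phi> N \<longleftrightarrow>
    (\<forall>m m' n. \<Phi> (m + m', n) - \<Phi> (m, n) - \<Phi> (m', n) \<in> N) \<and>
    (\<forall>m n n'. \<Phi> (m, n + n') - \<Phi> (m, n) - \<Phi> (m, n') \<in> N) \<and>
    (\<forall>c m n. \<Phi> (sM c m, n) - s c (\<Phi> (m, n)) \<in> N) \<and>
    (\<forall>c m n. \<Phi> (m, sN c n) - s c (\<Phi> (m, n)) \<in> N)"

definition trilinear_mod :: "('k::comm_ring_1 \<Rightarrow> 'b::ab_group_add \<Rightarrow> 'b) \<Rightarrow>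
    ('k \<Rightarrow> 'm::ab_group_add \<Rightarrow> 'm) \<Rightarrow> ('k \<Rightarrow> 'n::ab_group_add \<Rightarrow> 'n) \<Rightarrow>
    ('k \<Rightarrow> 'p::ab_group_add \<Rightarrow> 'p) \<Rightarrow> ('m \<times> 'n \<times> 'p \<Rightarrow> 'b) \<Rightarrow> 'b set \<Rightarrow> bool" where
  "trilinear_mod s sM sN sP \<Phi> N \<longleftrightarrow>
    (\<forall>m m' n p. \<Phi> (m + m', n, p) - \<Phi> (m, n, p) - \<Phi> (m', n, p) \<in> N) \<and>
    (\<forall>m n n' p. \<Phi> (m, n + n', p) - \<Phi> (m, n, p) - \<Phi> (m, n', p) \<in> N) \<and>
    (\<forall>m n p p'. \<Phi> (m, n, p + p') - \<Phi> (m, n, p) - \<Phi> (m, n, p') \<in> N) \<and>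
    (\<forall>c m n p. \<Phi> (sM c m, n, p) - s c (\<Phi> (m, n, p)) \<in> N) \<and>
    (\<forall>c m n p. \<Phi> (m, sN c n, p) - s c (\<Phi> (m, n, p)) \<in> N) \<and>
    (\<forall>c m n p. \<Phi> (m, n, sP c p) - s c (\<Phi> (m, n, p)) \<in> N)"

lemma teq_mod_sum_list:
  assumes s: "module s" and N: "module.subspace s N"
    and R: "\<forall>r\<in>R. finite (supp r) \<and> lin_ext s \<Phi> r \<in> N"
    and t: "teq_mod R xs ys"
  shows "sum_list (map \<Phi> xs) - sum_list (map \<Phi> ys) \<in> N"
proof -
  have "lin_ext s \<Phi> (fs xs - fs ys) \<in> N"
    using lin_ext_span[OF s N R] t by (auto simp: teq_mod_def)
  thus ?thesis by (simp add: lin_ext_diff[OF s] finite_supp_fs lin_ext_fs[OF s])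
qed

lemma gen2_lin_ext_in:
  assumes "module s" "bilinear_mod s sM sN \<Phi> N"
  shows "\<forall>r\<in>gen2 sM sN. finite (supp r) \<and> lin_ext s \<Phi> r \<in> N"
  using assms unfolding gen2_def bilinear_mod_def
  by (auto simp: lin_ext_diff lin_ext_scale lin_ext_dlt finite_supp_diff finite_supp_fscale
      finite_supp_dlt)

lemma gen3_lin_ext_in:
  assumes "module s" "trilinear_mod s sM sN sP \<Phi> N"
  shows "\<forall>r\<in>gen3 sM sN sP. finite (supp r) \<and> lin_ext s \<Phi> r \<in> N"
  using assms unfolding gen3_def trilinear_mod_def
  by (auto simp: lin_ext_diff lin_ext_scale lin_ext_dlt finite_supp_diff finite_supp_fscale
      finite_supp_dlt)

lemma teq2_sum_list:
  assumes "module s" "bilinear_mod s sM sN \<Phi> {0}" "teq2 sM sN xs ys"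
  shows "sum_list (map \<Phi> xs) = sum_list (map \<Phi> ys)"
  using teq_mod_sum_list[OF assms(1) module.subspace_single_0[OF assms(1)]
      gen2_lin_ext_in[OF assms(1,2)]] assms(3)
  by (simp add: teq2_eq_teq_mod)

lemma teq2_concat_map:
  assumes "bilinear_mod fscale sM sN (\<lambda>p. fs (G p)) (fspan R)" "teq2 sM sN xs ys"
  shows "teq_mod R (concat (map G xs)) (concat (map G ys))"
  using teq_mod_sum_list[OF module_fscale module.subspace_span[OF module_fscale]
      gen2_lin_ext_in[OF module_fscale assms(1)]] assms(2)
  by (simp add: teq_mod_def teq2_eq_teq_mod fs_concat)

lemma teq3_concat_map:
  assumes "trilinear_mod fscale sM sN sP (\<lambda>p. fs (G p)) (fspan R)" "teq3 sM sN sP xs ys"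
  shows "teq_mod R (concat (map G xs)) (concat (map G ys))"
  using teq_mod_sum_list[OF module_fscale module.subspace_span[OF module_fscale]
      gen3_lin_ext_in[OF module_fscale assms(1)]] assms(2)
  by (simp add: teq_mod_def teq3_eq_teq_mod fs_concat)

lemma concat_map_singleton: "concat (map (\<lambda>p. [\<phi> p]) xs) = map \<phi> xs"
  by (induction xs) auto

lemma teq2_map:
  assumes "bilinear_mod fscale sM sN (\<lambda>p. fs [\<phi> p]) (fspan R)" "teq2 sM sN xs ys"
  shows "teq_mod R (map \<phi> xs) (map \<phi> ys)"
  using teq2_concat_map[OF assms] by (simp add: concat_map_singleton)

lemma teq3_map:
  assumes "trilinear_mod fscale sM sN sP (\<lambda>p. fs [\<phi> p]) (fspan R)" "teq3 sM sN sP xs ys"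
  shows "teq_mod R (map \<phi> xs) (map \<phi> ys)"
  using teq3_concat_map[OF assms] by (simp add: concat_map_singleton)

lemma bilinear_mod_pair:
  assumes f: "module_hom sM tM f" and g: "module_hom sN tN g"
  shows "bilinear_mod fscale sM sN (\<lambda>p. fs [(\<lambda>(a, b). (f a, g b)) p]) (fspan (gen2 tM tN))"
  unfolding bilinear_mod_def fs_single
  by (simp add: module_hom.add[OF f] module_hom.add[OF g] module_hom.scale[OF f]
      module_hom.scale[OF g] gen2_add_left gen2_add_right gen2_scale_left gen2_scale_right)

lemma bilinear_mod_swap:
  assumes f: "module_hom sN tM f" and g: "module_hom sM tN g"
  shows "bilinear_mod fscale sM sN (\<lambda>p. fs [(\<lambda>(a, b). (f b, g a)) p]) (fspan (gen2 tM tN))"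
  unfolding bilinear_mod_def fs_single
  by (simp add: module_hom.add[OF f] module_hom.add[OF g] module_hom.scale[OF f]
      module_hom.scale[OF g] gen2_add_left gen2_add_right gen2_scale_left gen2_scale_right)

lemma bilinear_mod_append_third:
  "bilinear_mod fscale sM sN (\<lambda>q. fs [(\<lambda>(a, b). (a, b, c)) q]) (fspan (gen3 sM sN sP))"
  unfolding bilinear_mod_def fs_single by (simp add: gen3_add1 gen3_add2 gen3_scale1 gen3_scale2)

lemma trilinear_mod_reverse:
  assumes f: "module_hom s t f"
  shows "trilinear_mod fscale s s s (\<lambda>q. fs [(\<lambda>(x, y, z). (f z, f y, f x)) q]) (fspan (gen3 t t t))"
  unfolding trilinear_mod_def fs_single
  by (simp add: module_hom.add[OF f] module_hom.scale[OF f] gen3_add1 gen3_add2 gen3_add3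
      gen3_scale1 gen3_scale2 gen3_scale3)

definition tscale :: "('k \<Rightarrow> 'm \<Rightarrow> 'm) \<Rightarrow> 'k \<Rightarrow> ('m \<times> 'r) list \<Rightarrow> ('m \<times> 'r) list" where
  "tscale t c xs = map (\<lambda>(a, b). (t c a, b)) xs"

lemma fs_tscale_gen2: "fs (tscale tM c xs) - fscale c (fs xs) \<in> fspan (gen2 tM tN)"
  using fs_map_diff_scale_in_fspan[of xs "\<lambda>(a, b). (tM c a, b)" c id]
  by (simp add: tscale_def gen2_scale_left split: prod.splits)

lemma fs_tscale_gen3: "fs (tscale tM c xs) - fscale c (fs xs) \<in> fspan (gen3 tM tN tP)"
  using fs_map_diff_scale_in_fspan[of xs "\<lambda>(a, b). (tM c a, b)" c id]
  by (simp add: tscale_def gen3_scale1 split: prod.splits)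

lemma teq2_tscale_cong: "teq_mod (gen2 t tN) xs ys \<Longrightarrow>
    teq_mod (gen2 t tN) (tscale t c xs) (tscale t c ys)"
proof -
  assume "teq_mod (gen2 t tN) xs ys"
  moreover have "fs (tscale t c xs) - fs (tscale t c ys) =
    (fs (tscale t c xs) - fscale c (fs xs)) - (fs (tscale t c ys) - fscale c (fs ys))
      + fscale c (fs xs - fs ys)"
    by (simp add: fscale_diff)
  ultimately show ?thesis
    unfolding teq_mod_def
    by (metis fs_tscale_gen2 module.span_add[OF module_fscale] module.span_diff[OF module_fscale]
        module.span_scale[OF module_fscale])
qed

definition tmult :: "('h::ring_1 \<times> 'h) list \<Rightarrow> ('h \<times> 'h) list \<Rightarrow> ('h \<times> 'h) list" where
  "tmult xs ys = concat (map (\<lambda>(a, b). map (\<lambda>(a', b'). (a * a', b * b')) ys) xs)"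

lemma tmult_Nil1 [simp]: "tmult [] ys = []"
  by (simp add: tmult_def)
lemma tmult_Nil2 [simp]: "tmult xs [] = []"
  by (induction xs) (auto simp: tmult_def)
lemma tmult_Cons1:
  "tmult (x # xs) ys = map (\<lambda>(a', b'). (fst x * a', snd x * b')) ys @ tmult xs ys"
  by (simp add: tmult_def split_beta)
lemma tmult_append1: "tmult (xs @ xs') ys = tmult xs ys @ tmult xs' ys"
  by (simp add: tmult_def)
lemma tmult_concat1: "tmult (concat (map f zs)) ys = concat (map (\<lambda>z. tmult (f z) ys) zs)"
  by (induction zs) (auto simp: tmult_append1)
lemma tmult_assoc: "tmult (tmult xs ys) zs = tmult xs (tmult ys zs)"
  by (induction xs)
    (auto simp: tmult_Cons1 tmult_append1 tmult_def map_concat comp_def case_prod_unfold mult.assoc)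

lemma fs_tmult_append2: "fs (tmult xs (ys @ ys')) = fs (tmult xs ys) + fs (tmult xs ys')"
  by (induction xs) (auto simp: tmult_Cons1 fs_append fs_Nil algebra_simps)
lemma fs_tmult_concat2:
  "fs (tmult xs (concat (map f zs))) = sum_list (map (\<lambda>z. fs (tmult xs (f z))) zs)"
  by (induction zs) (auto simp: fs_tmult_append2 fs_Nil)

definition tconv :: "('h \<Rightarrow> ('h \<times> 'h) list) \<Rightarrow> ('h \<Rightarrow> ('h::ring_1 \<times> 'h) list) \<Rightarrow>
    ('h \<Rightarrow> ('h \<times> 'h) list) \<Rightarrow> 'h \<Rightarrow> ('h \<times> 'h) list" where
  "tconv \<Delta> F G h = concat (map (\<lambda>(a, b). tmult (F a) (G b)) (\<Delta> h))"

definition tflip :: "('h \<Rightarrow> 'h) \<Rightarrow> ('h \<times> 'h) list \<Rightarrow> ('h \<times> 'h) list" where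
  "tflip T xs = map (\<lambda>(a, b). (T b, T a)) xs"

definition tflip3 :: "('h \<Rightarrow> 'h) \<Rightarrow> ('h \<times> 'h \<times> 'h) list \<Rightarrow> ('h \<times> 'h \<times> 'h) list" where
  "tflip3 T xs = map (\<lambda>(a1, a2, a3). (T a3, T a2, T a1)) xs"

definition cop2_right :: "('h \<Rightarrow> ('h \<times> 'h) list) \<Rightarrow> 'h \<Rightarrow> ('h \<times> 'h \<times> 'h) list" where
  "cop2_right \<Delta> h = concat (map (\<lambda>(a, b). map (\<lambda>(b1, b2). (a, b1, b2)) (\<Delta> b)) (\<Delta> h))"

lemma additive_sum_list_map:
  assumes "\<And>x y. f (x + y) = f x + f y" "f 0 = 0"
  shows "f (sum_list (map g xs)) = sum_list (map (\<lambda>x. f (g x)) xs)"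
  by (induction xs) (auto simp: assms)

lemma concat_concat_map: "concat (concat (map f xs)) = concat (map (\<lambda>x. concat (f x)) xs)"
  by (induction xs) auto

section \<open>Hopf algebras\<close>

locale hopf =
  fixes sc :: "'k::comm_ring_1 \<Rightarrow> 'h::ring_1 \<Rightarrow> 'h"
    and \<Delta> :: "'h \<Rightarrow> ('h \<times> 'h) list" and \<epsilon> :: "'h \<Rightarrow> 'k" and S :: "'h \<Rightarrow> 'h"
  assumes hopf_algebra: "hopf_algebra sc \<Delta> \<epsilon> S"
begin

abbreviation "G2 \<equiv> gen2 sc sc"
abbreviation "G3 \<equiv> gen3 sc sc sc"
abbreviation "T2 \<equiv> teq_mod G2"
abbreviation "T3 \<equiv> teq_mod G3"
abbreviation tunit :: "'h \<Rightarrow> ('h \<times> 'h) list" where "tunit h \<equiv> [(sc (\<epsilon> h) 1, 1)]"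

lemma teq2_sc: "teq2 sc sc = T2" by (simp add: teq2_eq_teq_mod)
lemma teq3_sc: "teq3 sc sc sc = T3" by (simp add: teq3_eq_teq_mod)

lemma module_sc: "module sc"
  using hopf_algebra by (simp add: hopf_algebra_def kalg_def)
lemma scale_mult_left: "sc c (x * y) = sc c x * y"
  using hopf_algebra by (simp add: hopf_algebra_def kalg_def)
lemma scale_mult_right: "sc c (x * y) = x * sc c y"
  using hopf_algebra unfolding hopf_algebra_def kalg_def by blast

lemma Delta_add: "T2 (\<Delta> (x + y)) (\<Delta> x @ \<Delta> y)"
  using hopf_algebra by (simp add: hopf_algebra_def teq2_eq_teq_mod)
lemma Delta_scale: "T2 (\<Delta> (sc c x)) (tscale sc c (\<Delta> x))"
  using hopf_algebra by (simp add: hopf_algebra_def teq2_eq_teq_mod tscale_def)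
lemma Delta_coassoc: "T3 (cop2 \<Delta> h) (cop2_right \<Delta> h)"
  using hopf_algebra by (simp add: hopf_algebra_def teq3_eq_teq_mod cop2_right_def)
lemma Delta_mult: "T2 (\<Delta> (x * y)) (tmult (\<Delta> x) (\<Delta> y))"
  using hopf_algebra by (simp add: hopf_algebra_def teq2_eq_teq_mod tmult_def)
lemma Delta_one: "T2 (\<Delta> 1) [(1, 1)]"
  using hopf_algebra by (simp add: hopf_algebra_def teq2_eq_teq_mod)
lemma counit_left: "sum_list (map (\<lambda>(a, b). sc (\<epsilon> a) b) (\<Delta> h)) = h"
  using hopf_algebra by (simp add: hopf_algebra_def)
lemma counit_right: "sum_list (map (\<lambda>(a, b). sc (\<epsilon> b) a) (\<Delta> h)) = h"
  using hopf_algebra by (simp add: hopf_algebra_def)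
lemma eps_hom: "module_hom sc (\<lambda>c x. c * x) \<epsilon>"
  using hopf_algebra by (simp add: hopf_algebra_def)
lemma eps_mult: "\<epsilon> (x * y) = \<epsilon> x * \<epsilon> y"
  using hopf_algebra by (simp add: hopf_algebra_def)
lemma eps_one: "\<epsilon> 1 = 1"
  using hopf_algebra by (simp add: hopf_algebra_def)
lemma S_hom: "module_hom sc sc S"
  using hopf_algebra by (simp add: hopf_algebra_def)
lemma antipode_left: "sum_list (map (\<lambda>(a, b). S a * b) (\<Delta> h)) = sc (\<epsilon> h) 1"
  using hopf_algebra by (simp add: hopf_algebra_def)
lemma antipode_right: "sum_list (map (\<lambda>(a, b). a * S b) (\<Delta> h)) = sc (\<epsilon> h) 1"
  using hopf_algebra by (simp add: hopf_algebra_def)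

lemmas eps_add = module_hom.add[OF eps_hom]
  and eps_scale = module_hom.scale[OF eps_hom]
  and eps_zero = module_hom.zero[OF eps_hom]
  and S_add = module_hom.add[OF S_hom]
  and S_scale = module_hom.scale[OF S_hom]
  and S_zero = module_hom.zero[OF S_hom]
  and module_hom_ident = module.module_hom_ident[OF module_sc]

lemma eps_S: "\<epsilon> (S h) = \<epsilon> h"
proof -
  have "\<epsilon> (S h) = \<epsilon> (S (sum_list (map (\<lambda>(a, b). sc (\<epsilon> b) a) (\<Delta> h))))"
    by (simp add: counit_right)
  also have "\<dots> = sum_list (map (\<lambda>p. \<epsilon> (snd p) * \<epsilon> (S (fst p))) (\<Delta> h))"
    by (simp add: additive_sum_list_map[of "\<lambda>x. \<epsilon> (S x)"] S_add eps_add S_zero eps_zero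
        S_scale eps_scale split_beta)
  also have "\<dots> = \<epsilon> (sum_list (map (\<lambda>(a, b). S a * b) (\<Delta> h)))"
    by (simp add: additive_sum_list_map[of \<epsilon>] eps_add eps_zero eps_mult split_beta mult.commute)
  also have "\<dots> = \<epsilon> h"
    by (simp add: antipode_left eps_scale eps_mult eps_one)
  finally show ?thesis .
qed

lemma module_hom_mult_left: "module_hom sc sc (\<lambda>x. a * x)"
  by (simp add: module_hom_iff module_sc distrib_left scale_mult_right)
lemma module_hom_mult_right: "module_hom sc sc (\<lambda>x. x * a)"
  by (simp add: module_hom_iff module_sc distrib_right scale_mult_left)

lemma tmult_tscale1: "tmult (tscale sc c xs) ys = tscale sc c (tmult xs ys)"
  by (induction xs) (auto simp: tmult_Cons1 tscale_def scale_mult_left)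
lemma tmult_tscale2: "tmult xs (tscale sc c ys) = tscale sc c (tmult xs ys)"
  by (induction xs) (auto simp: tmult_Cons1 tscale_def scale_mult_right split_beta)
lemma tmult_tunit1: "tmult (tunit h) ys = tscale sc (\<epsilon> h) ys"
  by (simp add: tmult_Cons1 tscale_def split_beta scale_mult_left[symmetric])
lemma tmult_tunit2: "tmult xs (tunit h) = tscale sc (\<epsilon> h) xs"
  by (induction xs) (auto simp: tmult_Cons1 tscale_def split_beta scale_mult_right[symmetric])

lemma tmult_cong1:
  assumes "T2 xs xs'"
  shows "T2 (tmult xs ys) (tmult xs' ys)"
proof -
  let ?G = "\<lambda>(a, b). map (\<lambda>(a', b'). (a * a', b * b')) ys"
  have "bilinear_mod fscale sc sc (\<lambda>p. fs (?G p)) (fspan G2)"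
    unfolding bilinear_mod_def
    by (intro conjI allI; simp; rule fs_map_diff3_in_fspan fs_map_diff_scale_in_fspan)
      (auto simp: distrib_right scale_mult_left[symmetric] gen2_add_left gen2_add_right
        gen2_scale_left gen2_scale_right)
  from teq2_concat_map[OF this] assms show ?thesis
    by (simp add: tmult_def teq2_eq_teq_mod)
qed

lemma tmult_cong2:
  assumes "T2 ys ys'"
  shows "T2 (tmult xs ys) (tmult xs ys')"
  unfolding tmult_def
proof (rule teq_mod_concat_cong)
  fix p assume "p \<in> set xs"
  obtain a b where p: "p = (a, b)" by force
  from teq2_map[OF bilinear_mod_pair[OF module_hom_mult_left module_hom_mult_left]] assms
  show "T2 ((\<lambda>(a, b). map (\<lambda>(a', b'). (a * a', b * b')) ys) p)
      ((\<lambda>(a, b). map (\<lambda>(a', b'). (a * a', b * b')) ys') p)"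
    by (simp add: p teq2_eq_teq_mod case_prod_unfold)
qed

lemma tmult_concat2:
  "T2 (tmult xs (concat (map f zs))) (concat (map (\<lambda>z. tmult xs (f z)) zs))"
  by (rule teq_mod_of_fs_eq) (simp add: fs_tmult_concat2 fs_concat)

lemma tmult_append2: "T2 (tmult xs (ys @ ys')) (tmult xs ys @ tmult xs ys')"
  by (rule teq_mod_of_fs_eq) (simp add: fs_tmult_append2 fs_append)

definition tlinear :: "('h \<Rightarrow> ('h \<times> 'h) list) \<Rightarrow> bool" where
  "tlinear T \<longleftrightarrow> (\<forall>x y. T2 (T (x + y)) (T x @ T y)) \<and> (\<forall>c x. T2 (T (sc c x)) (tscale sc c (T x)))"

lemma tlinear_zero: "tlinear T \<Longrightarrow> T2 (T 0) []"
  by (rule teq_mod_Nil_of_self_append) (metis add_0 tlinear_def)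

lemma tlinear_sum_list:
  assumes "tlinear T"
  shows "T2 (T (sum_list (map f xs))) (concat (map (\<lambda>x. T (f x)) xs))"
proof (induction xs)
  case Nil thus ?case using tlinear_zero[OF assms] by simp
next
  case (Cons x xs)
  have "T2 (T (f x + sum_list (map f xs))) (T (f x) @ T (sum_list (map f xs)))"
    using assms by (simp add: tlinear_def)
  then show ?case by (simp add: teq_mod_trans teq_mod_append[OF teq_mod_refl Cons])
qed

lemma tlinear_Delta: "tlinear \<Delta>"
  by (simp add: tlinear_def Delta_add Delta_scale)

lemma tlinear_comp: "tlinear T \<Longrightarrow> module_hom sc sc f \<Longrightarrow> tlinear (\<lambda>x. T (f x))"
  by (simp add: tlinear_def module_hom.add module_hom.scale)

lemma tlinear_tmult1: "tlinear P \<Longrightarrow> tlinear (\<lambda>x. tmult (P x) Y)"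
  unfolding tlinear_def
  by (auto simp: tmult_tscale1[symmetric] tmult_append1[symmetric] intro: tmult_cong1)

lemma tlinear_tmult2:
  assumes "tlinear P" shows "tlinear (\<lambda>x. tmult Y (P x))"
  unfolding tlinear_def
proof (intro conjI allI)
  fix x y
  show "T2 (tmult Y (P (x + y))) (tmult Y (P x) @ tmult Y (P y))"
    using tmult_cong2[of "P (x + y)" "P x @ P y" Y] assms tmult_append2
    unfolding tlinear_def by (blast intro: teq_mod_trans)
next
  fix c x
  show "T2 (tmult Y (P (sc c x))) (tscale sc c (tmult Y (P x)))"
    using tmult_cong2[of "P (sc c x)" "tscale sc c (P x)" Y] assms
    unfolding tlinear_def tmult_tscale2 by blast
qed

lemma tlinear_pair1:
  assumes f: "module_hom sc sc f" shows "tlinear (\<lambda>x. [(f x, b)])"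
  unfolding tlinear_def
proof (intro conjI allI)
  fix x y show "T2 [(f (x + y), b)] ([(f x, b)] @ [(f y, b)])"
    by (simp only: teq_mod_append_iff fs_single module_hom.add[OF f] gen2_add_left)
next
  fix c x show "T2 [(f (sc c x), b)] (tscale sc c [(f x, b)])"
    by (simp add: tscale_def module_hom.scale[OF f] teq_mod_refl)
qed

lemma tlinear_pair2:
  assumes f: "module_hom sc sc f" shows "tlinear (\<lambda>x. [(a, f x)])"
  unfolding tlinear_def
proof (intro conjI allI)
  fix x y show "T2 [(a, f (x + y))] ([(a, f x)] @ [(a, f y)])"
    by (simp only: teq_mod_append_iff fs_single module_hom.add[OF f] gen2_add_right)
next
  fix c x show "T2 [(a, f (sc c x))] (tscale sc c [(a, f x)])"
    by (simp add: tscale_def module_hom.scale[OF f] teq_mod_def fs_single gen2_scale_swap)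
qed

lemma tlinear_tflip_Delta:
  assumes T: "module_hom sc sc T" shows "tlinear (\<lambda>h. tflip T (\<Delta> h))"
  unfolding tlinear_def
proof (intro conjI allI)
  fix x y show "T2 (tflip T (\<Delta> (x + y))) (tflip T (\<Delta> x) @ tflip T (\<Delta> y))"
    using teq2_map[OF bilinear_mod_swap[OF T T], of "\<Delta> (x + y)" "\<Delta> x @ \<Delta> y"] Delta_add
    by (simp add: tflip_def teq2_eq_teq_mod case_prod_unfold)
next
  fix c x
  have "T2 (tflip T (\<Delta> (sc c x))) (tflip T (tscale sc c (\<Delta> x)))"
    using teq2_map[OF bilinear_mod_swap[OF T T], of "\<Delta> (sc c x)"] Delta_scale
    by (simp add: tflip_def teq2_eq_teq_mod case_prod_unfold)
  moreover have "T2 (tflip T (tscale sc c (\<Delta> x))) (tscale sc c (tflip T (\<Delta> x)))"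
    unfolding tscale_def tflip_def map_map
    by (rule teq_mod_map_pointwise) (auto simp: module_hom.scale[OF T] gen2_scale_swap)
  ultimately show "T2 (tflip T (\<Delta> (sc c x))) (tscale sc c (tflip T (\<Delta> x)))"
    by (rule teq_mod_trans)
qed

lemma tlinear_add_diff: "tlinear T \<Longrightarrow> fs (T (x + y)) - fs (T x) - fs (T y) \<in> fspan G2"
  by (simp add: tlinear_def teq_mod_append_iff[symmetric])
lemma tlinear_scale_diff: "tlinear T \<Longrightarrow> fs (T (sc c x)) - fscale c (fs (T x)) \<in> fspan G2"
  by (rule fs_diff_scale_teq_mod[OF _ fs_tscale_gen2]) (simp add: tlinear_def)

lemma trilinear_mod_of_tlinear:
  assumes "\<And>n p. tlinear (\<lambda>m. \<Phi> (m, n, p))" "\<And>m p. tlinear (\<lambda>n. \<Phi> (m, n, p))"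
    and "\<And>m n. tlinear (\<lambda>p. \<Phi> (m, n, p))"
  shows "trilinear_mod fscale sc sc sc (\<lambda>q. fs (\<Phi> q)) (fspan G2)"
  unfolding trilinear_mod_def
  by (intro conjI allI)
    (rule tlinear_add_diff[OF assms(1)] tlinear_add_diff[OF assms(2)] tlinear_add_diff[OF assms(3)]
      tlinear_scale_diff[OF assms(1)] tlinear_scale_diff[OF assms(2)]
      tlinear_scale_diff[OF assms(3)])+

subsection \<open>Convolution in \<open>Hom(H, H \<otimes> H)\<close>\<close>

lemma tconv_cong1: "(\<And>a. T2 (F a) (F' a)) \<Longrightarrow> T2 (tconv \<Delta> F G h) (tconv \<Delta> F' G h)"
  unfolding tconv_def by (rule teq_mod_concat_cong) (auto intro: tmult_cong1)

lemma tconv_cong2: "(\<And>a. T2 (G a) (G' a)) \<Longrightarrow> T2 (tconv \<Delta> F G h) (tconv \<Delta> F G' h)"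
  unfolding tconv_def by (rule teq_mod_concat_cong) (auto intro: tmult_cong2)

lemma tconv_tunit1:
  assumes F: "tlinear F" shows "T2 (tconv \<Delta> tunit F h) (F h)"
proof -
  have "tconv \<Delta> tunit F h = concat (map (\<lambda>(a, b). tscale sc (\<epsilon> a) (F b)) (\<Delta> h))"
    by (simp add: tconv_def tmult_tunit1 case_prod_unfold)
  also have "T2 \<dots> (concat (map (\<lambda>(a, b). F (sc (\<epsilon> a) b)) (\<Delta> h)))"
    by (rule teq_mod_concat_cong, clarify, rule teq_mod_sym) (use F in \<open>simp add: tlinear_def\<close>)
  also have "T2 \<dots> (F (sum_list (map (\<lambda>(a, b). sc (\<epsilon> a) b) (\<Delta> h))))"
    using teq_mod_sym[OF tlinear_sum_list[OF F, of "\<lambda>(a, b). sc (\<epsilon> a) b" "\<Delta> h"]]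
    by (simp add: case_prod_unfold)
  finally show ?thesis by (simp only: counit_left)
qed

lemma tconv_tunit2:
  assumes F: "tlinear F" shows "T2 (tconv \<Delta> F tunit h) (F h)"
proof -
  have "tconv \<Delta> F tunit h = concat (map (\<lambda>(a, b). tscale sc (\<epsilon> b) (F a)) (\<Delta> h))"
    by (simp add: tconv_def tmult_tunit2 case_prod_unfold)
  also have "T2 \<dots> (concat (map (\<lambda>(a, b). F (sc (\<epsilon> b) a)) (\<Delta> h)))"
    by (rule teq_mod_concat_cong, clarify, rule teq_mod_sym) (use F in \<open>simp add: tlinear_def\<close>)
  also have "T2 \<dots> (F (sum_list (map (\<lambda>(a, b). sc (\<epsilon> b) a) (\<Delta> h))))"
    using teq_mod_sym[OF tlinear_sum_list[OF F, of "\<lambda>(a, b). sc (\<epsilon> b) a" "\<Delta> h"]]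
    by (simp add: case_prod_unfold)
  finally show ?thesis by (simp only: counit_right)
qed

lemma tconv_assoc:
  assumes F: "tlinear F" and G: "tlinear G" and K: "tlinear K"
  shows "T2 (tconv \<Delta> (tconv \<Delta> F G) K h) (tconv \<Delta> F (tconv \<Delta> G K) h)"
proof -
  define \<Phi> where "\<Phi> = (\<lambda>(a1, a2, b). tmult (tmult (F a1) (G a2)) (K b))"
  have \<Phi>: "trilinear_mod fscale sc sc sc (\<lambda>q. fs (\<Phi> q)) (fspan G2)"
    unfolding \<Phi>_def
    by (rule trilinear_mod_of_tlinear)
      (simp_all add: tlinear_tmult1 tlinear_tmult2 F G K)
  have "tconv \<Delta> (tconv \<Delta> F G) K h = concat (map \<Phi> (cop2 \<Delta> h))"
    by (simp add: \<Phi>_def tconv_def cop2_def tmult_concat1 map_concat comp_def case_prod_unfold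
        concat_concat_map)
  also have "T2 \<dots> (concat (map \<Phi> (cop2_right \<Delta> h)))"
    by (rule teq3_concat_map[OF \<Phi>]) (simp add: teq3_sc Delta_coassoc)
  also have "\<dots> = concat (map (\<lambda>(x, y).
      concat (map (\<lambda>(y1, y2). tmult (F x) (tmult (G y1) (K y2))) (\<Delta> y))) (\<Delta> h))"
    by (simp add: \<Phi>_def cop2_right_def tmult_assoc map_concat comp_def case_prod_unfold
        concat_concat_map)
  also have "T2 \<dots> (tconv \<Delta> F (tconv \<Delta> G K) h)"
    unfolding tconv_def
  proof (rule teq_mod_concat_cong, clarify)
    fix x y
    show "T2 (concat (map (\<lambda>(y1, y2). tmult (F x) (tmult (G y1) (K y2))) (\<Delta> y)))
        (tmult (F x) (concat (map (\<lambda>(a, b). tmult (G a) (K b)) (\<Delta> y))))"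
      using teq_mod_sym[OF tmult_concat2[of "F x" "\<lambda>(a, b). tmult (G a) (K b)" "\<Delta> y"]]
      by (simp add: case_prod_unfold)
  qed
  finally show ?thesis .
qed

lemma conv_Delta_S_Delta: "T2 (tconv \<Delta> (\<lambda>x. \<Delta> (S x)) \<Delta> h) (tunit h)"
proof -
  have "T2 (tconv \<Delta> (\<lambda>x. \<Delta> (S x)) \<Delta> h) (concat (map (\<lambda>(a, b). \<Delta> (S a * b)) (\<Delta> h)))"
    unfolding tconv_def by (rule teq_mod_concat_cong) (auto intro: teq_mod_sym[OF Delta_mult])
  also have "T2 \<dots> (\<Delta> (sum_list (map (\<lambda>(a, b). S a * b) (\<Delta> h))))"
    using teq_mod_sym[OF tlinear_sum_list[OF tlinear_Delta, of "\<lambda>(a, b). S a * b" "\<Delta> h"]]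
    by (simp add: case_prod_unfold)
  also have "\<dots> = \<Delta> (sc (\<epsilon> h) 1)"
    by (simp only: antipode_left)
  also have "T2 \<dots> (tscale sc (\<epsilon> h) [(1, 1)])"
    by (rule teq_mod_trans[OF Delta_scale teq2_tscale_cong[OF Delta_one]])
  finally show ?thesis by (simp add: tscale_def)
qed

lemma conv_pair_tflip_Delta: "T2 (tconv \<Delta> (\<lambda>b. [(1, b)]) (\<lambda>h. tflip S (\<Delta> h)) z) [(S z, 1)]"
proof -
  define \<Phi> where "\<Phi> = (\<lambda>(z1, u, v). [(S v, z1 * S u)])"
  have \<Phi>: "trilinear_mod fscale sc sc sc (\<lambda>q. fs (\<Phi> q)) (fspan G2)"
    unfolding \<Phi>_def
    by (rule trilinear_mod_of_tlinear)
      (simp_all add: tlinear_pair1 tlinear_pair2 S_hom module_hom_mult_right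
        module_hom_compose[OF S_hom module_hom_mult_left, unfolded comp_def])
  have counit_S:
    "T2 (concat (map (\<lambda>(c1, c2). [(m, c1 * S c2)]) (\<Delta> c))) [(sc (\<epsilon> c) m, 1)]" for m c
  proof -
    have "T2 (concat (map (\<lambda>(c1, c2). [(m, c1 * S c2)]) (\<Delta> c)))
        [(m, sum_list (map (\<lambda>(c1, c2). c1 * S c2) (\<Delta> c)))]"
      using teq_mod_sym[OF tlinear_sum_list[OF tlinear_pair2[OF module_hom_ident, of m],
          of "\<lambda>(c1, c2). c1 * S c2" "\<Delta> c"]]
      by (simp add: case_prod_unfold)
    also have "T2 \<dots> [(sc (\<epsilon> c) m, 1)]"
      by (simp add: antipode_right teq_mod_def fs_single gen2_scale_swap)
    finally show ?thesis .
  qed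
  have "tconv \<Delta> (\<lambda>b. [(1, b)]) (\<lambda>h. tflip S (\<Delta> h)) z = concat (map \<Phi> (cop2_right \<Delta> z))"
    by (simp add: \<Phi>_def tconv_def cop2_right_def tflip_def tmult_def map_concat comp_def
        case_prod_unfold concat_concat_map concat_map_singleton)
  also have "T2 \<dots> (concat (map \<Phi> (cop2 \<Delta> z)))"
    by (rule teq3_concat_map[OF \<Phi>]) (simp add: teq3_sc teq_mod_sym[OF Delta_coassoc])
  also have "\<dots> = concat (map (\<lambda>(c, d). concat (map (\<lambda>(c1, c2). [(S d, c1 * S c2)]) (\<Delta> c))) (\<Delta> z))"
    by (simp add: \<Phi>_def cop2_def map_concat comp_def case_prod_unfold concat_concat_map)
  also have "T2 \<dots> (concat (map (\<lambda>(c, d). [(sc (\<epsilon> c) (S d), 1)]) (\<Delta> z)))"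
    by (rule teq_mod_concat_cong) (auto simp: counit_S)
  also have "T2 \<dots> [(sum_list (map (\<lambda>(c, d). sc (\<epsilon> c) (S d)) (\<Delta> z)), 1)]"
    using teq_mod_sym[OF tlinear_sum_list[OF tlinear_pair1[OF module_hom_ident, of 1],
        of "\<lambda>(c, d). sc (\<epsilon> c) (S d)" "\<Delta> z"]]
    by (simp add: case_prod_unfold)
  also have "sum_list (map (\<lambda>(c, d). sc (\<epsilon> c) (S d)) (\<Delta> z)) = S z"
    using additive_sum_list_map[of S "\<lambda>(c, d). sc (\<epsilon> c) d" "\<Delta> z"]
    by (simp add: counit_left[unfolded case_prod_unfold] S_add S_zero S_scale case_prod_unfold)
  finally show ?thesis .
qed

lemma conv_Delta_tflip_Delta: "T2 (tconv \<Delta> \<Delta> (\<lambda>h. tflip S (\<Delta> h)) h) (tunit h)"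
proof -
  have Delta_eq: "tconv \<Delta> (\<lambda>a. [(a, 1)]) (\<lambda>b. [(1, b)]) = \<Delta>"
    by (simp add: fun_eq_iff tconv_def tmult_def case_prod_unfold concat_map_singleton)
  have "tconv \<Delta> \<Delta> (\<lambda>h. tflip S (\<Delta> h)) h =
      tconv \<Delta> (tconv \<Delta> (\<lambda>a. [(a, 1)]) (\<lambda>b. [(1, b)])) (\<lambda>h. tflip S (\<Delta> h)) h"
    by (simp only: Delta_eq)
  also have "T2 \<dots> (tconv \<Delta> (\<lambda>a. [(a, 1)]) (tconv \<Delta> (\<lambda>b. [(1, b)]) (\<lambda>h. tflip S (\<Delta> h))) h)"
    by (rule tconv_assoc[OF tlinear_pair1 tlinear_pair2 tlinear_tflip_Delta[OF S_hom]];
        rule module_hom_ident)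
  also have "T2 \<dots> (tconv \<Delta> (\<lambda>a. [(a, 1)]) (\<lambda>z. [(S z, 1)]) h)"
    by (rule tconv_cong2[OF conv_pair_tflip_Delta])
  also have "\<dots> = map (\<lambda>(a, b). (a * S b, 1)) (\<Delta> h)"
    by (simp add: tconv_def tmult_def case_prod_unfold concat_map_singleton)
  also have "T2 \<dots> [(sum_list (map (\<lambda>(a, b). a * S b) (\<Delta> h)), 1)]"
    using teq_mod_sym[OF tlinear_sum_list[OF tlinear_pair1[OF module_hom_ident, of 1],
        of "\<lambda>(a, b). a * S b" "\<Delta> h"]]
    by (simp add: case_prod_unfold concat_map_singleton)
  finally show ?thesis by (simp only: antipode_right)
qed

text \<open>Both \<open>\<Delta> \<circ> S\<close> and \<open>(S \<otimes> S) \<circ> \<tau> \<circ> \<Delta>\<close> are convolution inverses of \<open>\<Delta>\<close>.\<close>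

lemma Delta_S: "T2 (\<Delta> (S h)) (tflip S (\<Delta> h))"
proof -
  have "T2 (tflip S (\<Delta> h)) (tconv \<Delta> tunit (\<lambda>h. tflip S (\<Delta> h)) h)"
    by (rule teq_mod_sym[OF tconv_tunit1[OF tlinear_tflip_Delta[OF S_hom]]])
  also have "T2 \<dots> (tconv \<Delta> (tconv \<Delta> (\<lambda>x. \<Delta> (S x)) \<Delta>) (\<lambda>h. tflip S (\<Delta> h)) h)"
    by (rule tconv_cong1[OF teq_mod_sym[OF conv_Delta_S_Delta]])
  also have "T2 \<dots> (tconv \<Delta> (\<lambda>x. \<Delta> (S x)) (tconv \<Delta> \<Delta> (\<lambda>h. tflip S (\<Delta> h))) h)"
    by (rule tconv_assoc[OF tlinear_comp[OF tlinear_Delta S_hom] tlinear_Delta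
        tlinear_tflip_Delta[OF S_hom]])
  also have "T2 \<dots> (tconv \<Delta> (\<lambda>x. \<Delta> (S x)) tunit h)"
    by (rule tconv_cong2[OF conv_Delta_tflip_Delta])
  also have "T2 \<dots> (\<Delta> (S h))"
    by (rule tconv_tunit2[OF tlinear_comp[OF tlinear_Delta S_hom]])
  finally show ?thesis by (rule teq_mod_sym)
qed

definition anti_comultiplicative :: "('h \<Rightarrow> 'h) \<Rightarrow> bool" where
  "anti_comultiplicative T \<longleftrightarrow> module_hom sc sc T \<and> (\<forall>h. T2 (\<Delta> (T h)) (tflip T (\<Delta> h)))"

lemma anti_comultiplicative_S: "anti_comultiplicative S"
  by (simp add: anti_comultiplicative_def S_hom Delta_S)

lemma anti_comultiplicative_inverse:
  assumes T: "anti_comultiplicative T" and inv: "\<And>h. T (T' h) = h" "\<And>h. T' (T h) = h"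
  shows "anti_comultiplicative T'"
proof -
  have T_hom: "module_hom sc sc T" using T by (simp add: anti_comultiplicative_def)
  have hom: "module_hom sc sc T'"
    unfolding module_hom_iff
    by (metis inv module_sc module_hom.add[OF T_hom] module_hom.scale[OF T_hom])
  have "T2 (\<Delta> (T (T' h))) (tflip T (\<Delta> (T' h)))" for h
    using T by (simp add: anti_comultiplicative_def)
  then have Delta_eq: "T2 (\<Delta> h) (tflip T (\<Delta> (T' h)))" for h
    by (simp only: inv(1))
  have "T2 (tflip T' (\<Delta> h)) (tflip T' (tflip T (\<Delta> (T' h))))" for h
    unfolding tflip_def[of T']
    by (rule teq2_map[OF bilinear_mod_swap[OF hom hom]]) (simp add: teq2_sc Delta_eq)
  then have "T2 (tflip T' (\<Delta> h)) (\<Delta> (T' h))" for h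
    by (simp add: tflip_def case_prod_unfold comp_def inv(2))
  with hom show ?thesis
    by (simp add: anti_comultiplicative_def teq_mod_sym)
qed

lemma bilinear_mod_Delta_left:
  "bilinear_mod fscale sc sc (\<lambda>p. fs ((\<lambda>(a, b). map (\<lambda>(a1, a2). (a1, a2, b)) (\<Delta> a)) p))
    (fspan G3)"
  unfolding bilinear_mod_def
proof (intro conjI allI)
  fix m m' n
  have "T3 (map (\<lambda>(a1, a2). (a1, a2, n)) (\<Delta> (m + m'))) (map (\<lambda>(a1, a2). (a1, a2, n)) (\<Delta> m @ \<Delta> m'))"
    by (rule teq2_map[OF bilinear_mod_append_third]) (simp add: teq2_sc Delta_add)
  then show "fs ((\<lambda>(a, b). map (\<lambda>(a1, a2). (a1, a2, b)) (\<Delta> a)) (m + m', n))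
      - fs ((\<lambda>(a, b). map (\<lambda>(a1, a2). (a1, a2, b)) (\<Delta> a)) (m, n))
      - fs ((\<lambda>(a, b). map (\<lambda>(a1, a2). (a1, a2, b)) (\<Delta> a)) (m', n)) \<in> fspan G3"
    by (simp add: teq_mod_append_iff)
next
  fix c m n
  have "T3 (map (\<lambda>(a1, a2). (a1, a2, n)) (\<Delta> (sc c m)))
      (map (\<lambda>(a1, a2). (a1, a2, n)) (tscale sc c (\<Delta> m)))"
    by (rule teq2_map[OF bilinear_mod_append_third]) (simp add: teq2_sc Delta_scale)
  then have "T3 (map (\<lambda>(a1, a2). (a1, a2, n)) (\<Delta> (sc c m)))
      (tscale sc c (map (\<lambda>(a1, a2). (a1, a2, n)) (\<Delta> m)))"
    by (simp add: tscale_def case_prod_unfold comp_def)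
  from fs_diff_scale_teq_mod[OF this fs_tscale_gen3]
  show "fs ((\<lambda>(a, b). map (\<lambda>(a1, a2). (a1, a2, b)) (\<Delta> a)) (sc c m, n))
      - fscale c (fs ((\<lambda>(a, b). map (\<lambda>(a1, a2). (a1, a2, b)) (\<Delta> a)) (m, n))) \<in> fspan G3"
    by simp
qed (simp; rule fs_map_diff3_in_fspan fs_map_diff_scale_in_fspan;
     auto simp: gen3_add3 gen3_scale3 split: prod.splits)+

lemma cop2_anti_comultiplicative:
  assumes "anti_comultiplicative T"
  shows "T3 (cop2 \<Delta> (T h)) (tflip3 T (cop2 \<Delta> h))"
proof -
  have T: "module_hom sc sc T" and anti: "\<And>h. T2 (\<Delta> (T h)) (tflip T (\<Delta> h))"
    using assms by (simp_all add: anti_comultiplicative_def)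
  let ?G = "\<lambda>(a, b). map (\<lambda>(a1, a2). (a1, a2, b)) (\<Delta> a)"
  have "cop2 \<Delta> (T h) = concat (map ?G (\<Delta> (T h)))"
    by (simp add: cop2_def)
  also have "T3 \<dots> (concat (map ?G (tflip T (\<Delta> h))))"
    by (rule teq2_concat_map[OF bilinear_mod_Delta_left]) (simp add: teq2_sc anti)
  also have "\<dots> = concat (map (\<lambda>(a, b). map (\<lambda>(u, v). (u, v, T a)) (\<Delta> (T b))) (\<Delta> h))"
    by (simp add: tflip_def case_prod_unfold comp_def)
  also have "T3 \<dots> (concat (map (\<lambda>(a, b). map (\<lambda>(u, v). (u, v, T a)) (tflip T (\<Delta> b))) (\<Delta> h)))"
    by (rule teq_mod_concat_cong, clarify, rule teq2_map[OF bilinear_mod_append_third])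
      (simp add: teq2_sc anti)
  also have "\<dots> = tflip3 T (cop2_right \<Delta> h)"
    by (simp add: tflip_def tflip3_def cop2_right_def map_concat comp_def case_prod_unfold)
  also have "T3 \<dots> (tflip3 T (cop2 \<Delta> h))"
    unfolding tflip3_def
    by (rule teq3_map[OF trilinear_mod_reverse[OF T]]) (simp add: teq3_sc teq_mod_sym[OF Delta_coassoc])
  finally show ?thesis .
qed

lemma teq_mod_transport_Delta:
  assumes "bilinear_mod fscale sc sc (\<lambda>p. fs [\<Psi> p]) (fspan R)" "anti_comultiplicative T"
    and "teq_mod R X (map \<Psi> (\<Delta> (T h)))"
  shows "teq_mod R X (map \<Psi> (tflip T (\<Delta> h)))"
  using assms(3) teq2_map[OF assms(1)] assms(2)
  by (auto simp: anti_comultiplicative_def teq2_sc intro: teq_mod_trans)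

lemma teq_mod_transport_cop2:
  assumes "trilinear_mod fscale sc sc sc (\<lambda>p. fs [\<Psi> p]) (fspan R)" "anti_comultiplicative T"
    and "teq_mod R X (map \<Psi> (cop2 \<Delta> (T h)))"
  shows "teq_mod R X (map \<Psi> (tflip3 T (cop2 \<Delta> h)))"
  using assms(3) teq3_map[OF assms(1)] cop2_anti_comultiplicative[OF assms(2)]
  by (auto simp: teq3_sc intro: teq_mod_trans)

lemma trilinear_mod_coaction1:
  assumes f: "module_hom sc scA f" and g: "module_hom sc sc g" and k: "module_hom sc sc k"
  shows "trilinear_mod fscale sc sc sc (\<lambda>q. fs [(\<lambda>(a1, a2, a3). (f a2, g a3 * k a1)) q])
    (fspan (gen2 scA sc))"
  unfolding trilinear_mod_def fs_single
  by (simp add: module_hom.add[OF f] module_hom.scale[OF f] module_hom.add[OF g]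
      module_hom.scale[OF g] module_hom.add[OF k] module_hom.scale[OF k] distrib_left distrib_right
      scale_mult_left[symmetric] scale_mult_right[symmetric] gen2_add_left gen2_add_right
      gen2_scale_left gen2_scale_right)

lemma trilinear_mod_coaction2:
  assumes f: "module_hom sc scA f" and g: "module_hom sc sc g" and k: "module_hom sc sc k"
  shows "trilinear_mod fscale sc sc sc (\<lambda>q. fs [(\<lambda>(a1, a2, a3). (f a2, k a1 * g a3)) q])
    (fspan (gen2 scA sc))"
  unfolding trilinear_mod_def fs_single
  by (simp add: module_hom.add[OF f] module_hom.scale[OF f] module_hom.add[OF g]
      module_hom.scale[OF g] module_hom.add[OF k] module_hom.scale[OF k] distrib_left distrib_right
      scale_mult_left[symmetric] scale_mult_right[symmetric] gen2_add_left gen2_add_right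
      gen2_scale_left gen2_scale_right)

lemma conv'_comp_S:
  assumes A: "kalg scA" and f: "module_hom sc scA f" and g: "module_hom sc scA g"
  shows "conv' \<Delta> g f \<circ> S = conv \<Delta> (g \<circ> S) (f \<circ> S)"
proof
  fix h
  have A_mod: "module scA" and A_left: "scA c (x * y) = scA c x * y"
    and A_right: "scA c (x * y) = x * scA c y" for c x y
    using A unfolding kalg_def by blast+
  have "bilinear_mod scA sc sc (\<lambda>(a, b). g b * f a) {0}"
    unfolding bilinear_mod_def
    by (simp add: module_hom.add[OF f] module_hom.scale[OF f] module_hom.add[OF g]
        module_hom.scale[OF g] distrib_left distrib_right A_left[symmetric] A_right[symmetric])
  then have "sum_list (map (\<lambda>(a, b). g b * f a) (\<Delta> (S h))) =
      sum_list (map (\<lambda>(a, b). g b * f a) (tflip S (\<Delta> h)))"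
    by (rule teq2_sum_list[OF A_mod]) (simp add: teq2_sc Delta_S)
  then show "(conv' \<Delta> g f \<circ> S) h = conv \<Delta> (g \<circ> S) (f \<circ> S) h"
    by (simp add: conv'_def conv_def tflip_def case_prod_unfold comp_def)
qed

lemma cid_comp_S: "cid \<epsilon> scA \<circ> S = cid \<epsilon> scA"
  by (simp add: fun_eq_iff cid_def eps_S)

end

section \<open>The isomorphism of categories\<close>

lemma CA_module_hom: "f \<in> CA sc \<Delta> S scA \<rho> i j \<Longrightarrow> module_hom sc scA f"
  by (cases i; cases j) auto

lemma CA'_module_hom: "f \<in> CA' sc \<Delta> Sbar scA \<rho> i j \<Longrightarrow> module_hom sc scA f"
  by (cases i; cases j) auto

locale hopf_bijective_antipode = hopf +
  fixes Sbar
  assumes S_Sbar: "\<And>h. S (Sbar h) = h" and Sbar_S: "\<And>h. Sbar (S h) = h"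
begin

lemma anti_comultiplicative_Sbar: "anti_comultiplicative Sbar"
  by (rule anti_comultiplicative_inverse[OF anti_comultiplicative_S S_Sbar Sbar_S])

lemma Sbar_hom: "module_hom sc sc Sbar"
  using anti_comultiplicative_Sbar by (simp add: anti_comultiplicative_def)

lemma CA'_comp_S:
  assumes f': "f \<in> CA' sc \<Delta> Sbar scA \<rho> i j"
  shows "f \<circ> S \<in> CA sc \<Delta> S scA \<rho> i j"
proof -
  have f: "module_hom sc scA f" by (rule CA'_module_hom[OF f'])
  have fS: "module_hom sc scA (f \<circ> S)" by (rule module_hom_compose[OF S_hom f])
  note transport2 = teq_mod_transport_Delta[OF _ anti_comultiplicative_S]
  note transport3 = teq_mod_transport_cop2[OF _ anti_comultiplicative_S]
  show ?thesis
  proof (cases i; cases j)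
    assume "i = One" "j = One" then show ?thesis using f' fS by auto
  next
    assume ij: "i = One" "j = Two"
    then have "teq_mod (gen2 scA sc) (\<rho> (f (S h))) (map (\<lambda>(a, b). (f a, b)) (\<Delta> (S h)))" for h
      using f' by (simp add: teq2_eq_teq_mod)
    from transport2[OF bilinear_mod_pair[OF f module_hom_ident] this] ij fS show ?thesis
      by (simp add: teq2_eq_teq_mod tflip_def case_prod_unfold comp_def)
  next
    assume ij: "i = Two" "j = One"
    then have "teq_mod (gen2 scA sc) (\<rho> (f (S h))) (map (\<lambda>(a, b). (f b, Sbar a)) (\<Delta> (S h)))" for h
      using f' by (simp add: teq2_eq_teq_mod)
    from transport2[OF bilinear_mod_swap[OF f Sbar_hom] this] ij fS show ?thesis
      by (simp add: teq2_eq_teq_mod tflip_def case_prod_unfold comp_def Sbar_S)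
  next
    assume ij: "i = Two" "j = Two"
    then have "teq_mod (gen2 scA sc) (\<rho> (f (S h)))
        (map (\<lambda>(a1, a2, a3). (f a2, a3 * Sbar a1)) (cop2 \<Delta> (S h)))" for h
      using f' by (simp add: teq2_eq_teq_mod)
    from transport3[OF trilinear_mod_coaction1[OF f module_hom_ident Sbar_hom] this] ij fS
    show ?thesis
      by (simp add: teq2_eq_teq_mod tflip3_def case_prod_unfold comp_def Sbar_S)
  qed
qed

lemma CA_comp_Sbar:
  assumes f': "f \<in> CA sc \<Delta> S scA \<rho> i j"
  shows "f \<circ> Sbar \<in> CA' sc \<Delta> Sbar scA \<rho> i j"
proof -
  have f: "module_hom sc scA f" by (rule CA_module_hom[OF f'])
  have fS: "module_hom sc scA (f \<circ> Sbar)" by (rule module_hom_compose[OF Sbar_hom f])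
  note transport2 = teq_mod_transport_Delta[OF _ anti_comultiplicative_Sbar]
  note transport3 = teq_mod_transport_cop2[OF _ anti_comultiplicative_Sbar]
  show ?thesis
  proof (cases i; cases j)
    assume "i = One" "j = One" then show ?thesis using f' fS by auto
  next
    assume ij: "i = One" "j = Two"
    then have "teq_mod (gen2 scA sc) (\<rho> (f (Sbar h))) (map (\<lambda>(a, b). (f b, S a)) (\<Delta> (Sbar h)))"
      for h
      using f' by (simp add: teq2_eq_teq_mod)
    from transport2[OF bilinear_mod_swap[OF f S_hom] this] ij fS show ?thesis
      by (simp add: teq2_eq_teq_mod tflip_def case_prod_unfold comp_def S_Sbar)
  next
    assume ij: "i = Two" "j = One"
    then have "teq_mod (gen2 scA sc) (\<rho> (f (Sbar h))) (map (\<lambda>(a, b). (f a, b)) (\<Delta> (Sbar h)))"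
      for h
      using f' by (simp add: teq2_eq_teq_mod)
    from transport2[OF bilinear_mod_pair[OF f module_hom_ident] this] ij fS show ?thesis
      by (simp add: teq2_eq_teq_mod tflip_def case_prod_unfold comp_def)
  next
    assume ij: "i = Two" "j = Two"
    then have "teq_mod (gen2 scA sc) (\<rho> (f (Sbar h)))
        (map (\<lambda>(a1, a2, a3). (f a2, S a1 * a3)) (cop2 \<Delta> (Sbar h)))" for h
      using f' by (simp add: teq2_eq_teq_mod)
    from transport3[OF trilinear_mod_coaction2[OF f module_hom_ident S_hom] this] ij fS
    show ?thesis
      by (simp add: teq2_eq_teq_mod tflip3_def case_prod_unfold comp_def S_Sbar)
  qed
qed

end

theorem proposition2p1:
  fixes sc :: "'k::comm_ring_1 \<Rightarrow> 'h::ring_1 \<Rightarrow> 'h"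
    and \<Delta> :: "'h \<Rightarrow> ('h \<times> 'h) list" and \<epsilon> :: "'h \<Rightarrow> 'k"
    and S Sbar :: "'h \<Rightarrow> 'h"
    and scA :: "'k \<Rightarrow> 'a::ring_1 \<Rightarrow> 'a" and \<rho> :: "'a \<Rightarrow> ('a \<times> 'h) list"
  assumes "hopf_algebra sc \<Delta> \<epsilon> S"
    and "\<And>h. S (Sbar h) = h" and "\<And>h. Sbar (S h) = h"
    and "comodule_algebra sc \<Delta> \<epsilon> scA \<rho>"
  shows
    "(\<forall>i j. \<forall>f' \<in> CA' sc \<Delta> Sbar scA \<rho> i j. f' \<circ> S \<in> CA sc \<Delta> S scA \<rho> i j)
   \<and> (\<forall>i j l. \<forall>f' \<in> CA' sc \<Delta> Sbar scA \<rho> i j. \<forall>g' \<in> CA' sc \<Delta> Sbar scA \<rho> j l.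
        conv' \<Delta> g' f' \<circ> S = conv \<Delta> (g' \<circ> S) (f' \<circ> S))
   \<and> cid \<epsilon> scA \<circ> S = cid \<epsilon> scA
   \<and> (\<forall>i j. \<forall>f \<in> CA sc \<Delta> S scA \<rho> i j. f \<circ> Sbar \<in> CA' sc \<Delta> Sbar scA \<rho> i j)
   \<and> (\<forall>i j. \<forall>f' \<in> CA' sc \<Delta> Sbar scA \<rho> i j. (f' \<circ> S) \<circ> Sbar = f')
   \<and> (\<forall>i j. \<forall>f \<in> CA sc \<Delta> S scA \<rho> i j. (f \<circ> Sbar) \<circ> S = f)"
proof -
  interpret hopf_bijective_antipode sc \<Delta> \<epsilon> S Sbar
    using assms(1-3) by unfold_locales
  have A: "kalg scA" using assms(4) by (simp add: comodule_algebra_def)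
  show ?thesis
    by (auto simp: CA'_comp_S CA_comp_Sbar conv'_comp_S[OF A] CA'_module_hom cid_comp_S
        fun_eq_iff S_Sbar Sbar_S)
qed

end
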